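(* Let $N \in \mathbb{N}$, $\beta>0$ and $h\in\mathbb{R}$. Let $(g_{ij})_{1\le i<j\le N}$ be independent centered Gaussian random variables with variance $1/N$, extended to a symmetric matrix by $g_{ji}=g_{ij}$ and $g_{ii}=0$. Define the quenched finite-volume free energy \[ N f_N(\beta,h) = \log E_o\left[\exp\left(\beta H_N(\sigma) + h\sum_{i=1}^N \sigma_i\right)\right], \qquad H_N(\sigma)=\sum_{1\le i<j\le N} g_{ij}\sigma_i\sigma_j = \frac12\sum_{i,j=1}^N g_{ij}\sigma_i\sigma_j, \] where $E_o$ denotes expectation with respect to the uniform probability measure $P_o(\sigma)=2^{-N}$ on $\Sigma_N=\{-1,+1\}^N$. For each fixed realization of the matrix $(g_{ij})$, let $\mathsf{X}=(\mathsf{X}_i)_{i=1}^N$ be a centered Gaussian random vector (independent of everything else, with expectation denoted $\mathsf{E}$) with covariance \[ \mathsf{E}\,\mathsf{X}_i\mathsf{X}_j = \begin{cases} \sum_{k=1}^N |g_{ik}|, & i=j,\\ g_{ij}, & i\neq j.\end{cases} \] Then \[ N f_N(\beta,h) = \log \mathsf{E}\exp\left(\sum_{i=1}^N \log\cosh\left(h+\sqrt{\beta}\,\mathsf{X}_i\right)\right) - \frac{\beta}{2}\sum_{i,j=1}^N |g_{ij}|. \]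
   Context: This is the Sherrington–Kirkpatrick spin glass model. The disorder $(g_{ij})$ is quenched: the identity is asserted for each fixed realization of the matrix $(g_{ij})$, with $\mathsf{E}$ the expectation only over the auxiliary Gaussian field $\mathsf{X}$ (whose covariance depends on the realization of $(g_{ij})$). *)

theory Defs
  imports "HOL-Probability.Probability"
begin

definition spin_configs :: "nat \<Rightarrow> (nat \<Rightarrow> real) set" where
  "spin_configs N = ({..<N} \<rightarrow>\<^sub>E {-1, 1})"

definition SK_H :: "nat \<Rightarrow> (nat \<Rightarrow> nat \<Rightarrow> real) \<Rightarrow> (nat \<Rightarrow> real) \<Rightarrow> real" where
  "SK_H N g \<sigma> = (\<Sum>i<N. \<Sum>j\<in>{i<..<N}. g i j * \<sigma> i * \<sigma> j)"

definition N_free_energy :: "nat \<Rightarrow> (nat \<Rightarrow> nat \<Rightarrow> real) \<Rightarrow> real \<Rightarrow> real \<Rightarrow> real" where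
  "N_free_energy N g \<beta> h =
     ln ((\<Sum>\<sigma>\<in>spin_configs N. exp (\<beta> * SK_H N g \<sigma> + h * (\<Sum>i<N. \<sigma> i))) / 2 ^ N)"

definition aux_cov :: "nat \<Rightarrow> (nat \<Rightarrow> nat \<Rightarrow> real) \<Rightarrow> nat \<Rightarrow> nat \<Rightarrow> real" where
  "aux_cov N g i j = (if i = j then (\<Sum>k<N. \<bar>g i k\<bar>) else g i j)"

definition centered_gaussian_vector ::
  "'a measure \<Rightarrow> nat \<Rightarrow> (nat \<Rightarrow> 'a \<Rightarrow> real) \<Rightarrow> (nat \<Rightarrow> nat \<Rightarrow> real) \<Rightarrow> bool" where
  "centered_gaussian_vector M N X C \<longleftrightarrow>
     (\<forall>i<N. X i \<in> borel_measurable M) \<and>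
     (\<forall>a :: nat \<Rightarrow> real.
        (let v = (\<Sum>i<N. \<Sum>j<N. a i * a j * C i j) in
         if v = 0 then (AE \<omega> in M. (\<Sum>i<N. a i * X i \<omega>) = 0)
         else distributed M lborel (\<lambda>\<omega>. \<Sum>i<N. a i * X i \<omega>) (normal_density 0 (sqrt v))))"

end

theory Submission
  imports Defs
begin

(* Expanding each cosh as an average over a spin s = -1, 1 gives
   prod_i cosh (h + sqrt beta X_i) = E_o exp (h sum_i sigma_i + sqrt beta sum_i sigma_i X_i).
   The Gaussian moment generating function turns the X-expectation of the second factor into
   exp (beta/2 sigma^T C sigma), and because sigma_i^2 = 1 the quadratic form of the covariance C
   at a spin configuration is sum_ij |g_ij| + 2 H_N(sigma): the diagonal of C contributes the
   sigma-independent constant, the off-diagonal part the Hamiltonian. *)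

lemma normal_density_mult_exp:
  fixes \<mu> \<sigma> t x :: real
  assumes "\<sigma> \<noteq> 0"
  shows "normal_density \<mu> \<sigma> x * exp (t * x)
           = exp (t * \<mu> + t\<^sup>2 * \<sigma>\<^sup>2 / 2) * normal_density (\<mu> + t * \<sigma>\<^sup>2) \<sigma> x"
proof -
  have "- (x - \<mu>)\<^sup>2 / (2 * \<sigma>\<^sup>2) + t * x
          = (t * \<mu> + t\<^sup>2 * \<sigma>\<^sup>2 / 2) + - (x - (\<mu> + t * \<sigma>\<^sup>2))\<^sup>2 / (2 * \<sigma>\<^sup>2)"
    using assms by (simp add: field_simps power2_eq_square)
  then show ?thesis
    unfolding normal_density_def by (simp add: exp_add [symmetric])
qed

lemma (in prob_space) normal_mgf:
  fixes \<mu> \<sigma> t :: real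
  assumes Y: "distributed M lborel Y (normal_density \<mu> \<sigma>)" and "\<sigma> > 0"
  shows "integrable M (\<lambda>\<omega>. exp (t * Y \<omega>))"
    and "expectation (\<lambda>\<omega>. exp (t * Y \<omega>)) = exp (t * \<mu> + t\<^sup>2 * \<sigma>\<^sup>2 / 2)"
proof -
  have density: "(\<lambda>x. normal_density \<mu> \<sigma> x * exp (t * x))
      = (\<lambda>x. exp (t * \<mu> + t\<^sup>2 * \<sigma>\<^sup>2 / 2) * normal_density (\<mu> + t * \<sigma>\<^sup>2) \<sigma> x)"
    using normal_density_mult_exp \<open>\<sigma> > 0\<close> by auto
  have "integrable lborel (\<lambda>x. normal_density \<mu> \<sigma> x * exp (t * x))"
    unfolding density using \<open>\<sigma> > 0\<close> by simp
  then show "integrable M (\<lambda>\<omega>. exp (t * Y \<omega>))"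
    using distributed_integrable [OF Y, of "\<lambda>x. exp (t * x)"] by simp
  have "expectation (\<lambda>\<omega>. exp (t * Y \<omega>)) = (\<integral>x. normal_density \<mu> \<sigma> x * exp (t * x) \<partial>lborel)"
    using distributed_integral [OF Y, of "\<lambda>x. exp (t * x)"] by simp
  also have "\<dots> = exp (t * \<mu> + t\<^sup>2 * \<sigma>\<^sup>2 / 2)"
    unfolding density using \<open>\<sigma> > 0\<close> by simp
  finally show "expectation (\<lambda>\<omega>. exp (t * Y \<omega>)) = exp (t * \<mu> + t\<^sup>2 * \<sigma>\<^sup>2 / 2)" .
qed

lemma (in prob_space) centered_gaussian_vector_mgf:
  fixes C :: "nat \<Rightarrow> nat \<Rightarrow> real" and a :: "nat \<Rightarrow> real"
  assumes X: "centered_gaussian_vector M N X C"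
    and nonneg: "(\<Sum>i<N. \<Sum>j<N. a i * a j * C i j) \<ge> 0"
  defines "Y \<equiv> \<lambda>\<omega>. \<Sum>i<N. a i * X i \<omega>"
  shows "integrable M (\<lambda>\<omega>. exp (t * Y \<omega>))"
    and "expectation (\<lambda>\<omega>. exp (t * Y \<omega>)) = exp (t\<^sup>2 * (\<Sum>i<N. \<Sum>j<N. a i * a j * C i j) / 2)"
proof -
  define v where "v = (\<Sum>i<N. \<Sum>j<N. a i * a j * C i j)"
  have law: "if v = 0 then (AE \<omega> in M. Y \<omega> = 0)
             else distributed M lborel Y (normal_density 0 (sqrt v))"
    using X unfolding centered_gaussian_vector_def v_def Y_def Let_def by blast
  have "integrable M (\<lambda>\<omega>. exp (t * Y \<omega>)) \<and> expectation (\<lambda>\<omega>. exp (t * Y \<omega>)) = exp (t\<^sup>2 * v / 2)"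
  proof (cases "v = 0")
    case True
    have "X i \<in> borel_measurable M" if "i < N" for i
      using X that unfolding centered_gaussian_vector_def by blast
    then have measurable: "(\<lambda>\<omega>. exp (t * Y \<omega>)) \<in> borel_measurable M"
      unfolding Y_def by measurable
    have trivial: "AE \<omega> in M. exp (t * Y \<omega>) = 1"
      using law True by (auto elim: AE_mp)
    have "integrable M (\<lambda>\<omega>. exp (t * Y \<omega>)) = integrable M (\<lambda>_. 1 :: real)"
      by (rule integrable_cong_AE) (use measurable trivial in auto)
    moreover have "expectation (\<lambda>\<omega>. exp (t * Y \<omega>)) = expectation (\<lambda>_. 1 :: real)"
      by (rule integral_cong_AE) (use measurable trivial in auto)
    ultimately show ?thesis using True prob_space by simp
  next
    case False
    with nonneg have "v > 0" unfolding v_def by simp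
    then show ?thesis
      using normal_mgf [of Y 0 "sqrt v" t] law False by simp
  qed
  then show "integrable M (\<lambda>\<omega>. exp (t * Y \<omega>))"
    and "expectation (\<lambda>\<omega>. exp (t * Y \<omega>)) = exp (t\<^sup>2 * (\<Sum>i<N. \<Sum>j<N. a i * a j * C i j) / 2)"
    unfolding v_def by auto
qed

lemma finite_spin_configs: "finite (spin_configs N)"
  unfolding spin_configs_def by (simp add: finite_PiE)

lemma spin_configs_nonempty: "spin_configs N \<noteq> {}"
  unfolding spin_configs_def by (simp add: PiE_eq_empty_iff)

lemma spin_configs_values:
  assumes "\<sigma> \<in> spin_configs N" and "i < N"
  shows "\<sigma> i = -1 \<or> \<sigma> i = 1"
  using assms unfolding spin_configs_def by auto

lemma prod_cosh_eq_spin_average: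
  fixes a :: "nat \<Rightarrow> real"
  shows "(\<Prod>i<N. cosh (a i)) = (\<Sum>\<sigma>\<in>spin_configs N. exp (\<Sum>i<N. \<sigma> i * a i)) / 2 ^ N"
proof -
  have cosh_as_sum: "cosh x = (\<Sum>s\<in>{-1, 1}. exp (s * x) / 2)" for x :: real
    by (simp add: cosh_def add_divide_distrib)
  have "(\<Prod>i<N. cosh (a i)) = (\<Prod>i<N. \<Sum>s\<in>{-1, 1}. exp (s * a i) / 2)"
    by (simp only: cosh_as_sum)
  also have "\<dots> = (\<Sum>\<sigma>\<in>spin_configs N. \<Prod>i<N. exp (\<sigma> i * a i) / 2)"
    unfolding spin_configs_def by (rule prod_sum_PiE) auto
  also have "\<dots> = (\<Sum>\<sigma>\<in>spin_configs N. exp (\<Sum>i<N. \<sigma> i * a i)) / 2 ^ N"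
    by (simp add: prod_dividef exp_sum sum_divide_distrib)
  finally show ?thesis .
qed

lemma sum_sym_eq_twice_upper:
  fixes f :: "nat \<Rightarrow> nat \<Rightarrow> 'a :: comm_semiring_1"
  assumes sym: "\<And>i j. f i j = f j i" and diag: "\<And>i. f i i = 0"
  shows "(\<Sum>i<N. \<Sum>j<N. f i j) = 2 * (\<Sum>i<N. \<Sum>j\<in>{i<..<N}. f i j)"
proof (induction N)
  case 0
  then show ?case by simp
next
  case (Suc N)
  have "{i<..<Suc N} = insert N {i<..<N}" if "i < N" for i
    using that by auto
  moreover have "{N<..<Suc N} = {}"
    by auto
  ultimately have upper: "(\<Sum>i<Suc N. \<Sum>j\<in>{i<..<Suc N}. f i j)
      = (\<Sum>i<N. \<Sum>j\<in>{i<..<N}. f i j) + (\<Sum>i<N. f i N)"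
    by (simp add: sum.distrib add.commute)
  have "(\<Sum>i<Suc N. \<Sum>j<Suc N. f i j)
      = (\<Sum>i<N. \<Sum>j<N. f i j) + (\<Sum>i<N. f i N) + (\<Sum>j<N. f N j) + f N N"
    by (simp add: sum.distrib algebra_simps)
  also have "\<dots> = (\<Sum>i<N. \<Sum>j<N. f i j) + 2 * (\<Sum>i<N. f i N)"
    using sym diag by (simp add: mult_2 add.assoc)
  finally show ?case
    using Suc.IH upper by (simp add: distrib_left)
qed

lemma twice_SK_H_eq_quadratic_form:
  assumes "\<And>i j. g i j = g j i" and "\<And>i. g i i = 0"
  shows "2 * SK_H N g \<sigma> = (\<Sum>i<N. \<Sum>j<N. g i j * \<sigma> i * \<sigma> j)"
  unfolding SK_H_def using assms
  by (intro sum_sym_eq_twice_upper [symmetric]) (auto simp: mult.commute)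

lemma aux_cov_form_at_spin:
  assumes diag: "\<And>i. g i i = 0" and \<sigma>: "\<sigma> \<in> spin_configs N"
  shows "(\<Sum>i<N. \<Sum>j<N. \<sigma> i * \<sigma> j * aux_cov N g i j)
           = (\<Sum>i<N. \<Sum>j<N. \<bar>g i j\<bar> + g i j * \<sigma> i * \<sigma> j)"
proof (rule sum.cong [OF refl])
  fix i assume "i \<in> {..<N}"
  then have "\<sigma> i * \<sigma> i = 1"
    using spin_configs_values [OF \<sigma>] by fastforce
  then have "\<sigma> i * \<sigma> j * aux_cov N g i j = (if i = j then \<Sum>k<N. \<bar>g i k\<bar> else 0) + g i j * \<sigma> i * \<sigma> j"
    for j
    using diag by (cases "i = j") (simp_all add: aux_cov_def)
  then show "(\<Sum>j<N. \<sigma> i * \<sigma> j * aux_cov N g i j) = (\<Sum>j<N. \<bar>g i j\<bar> + g i j * \<sigma> i * \<sigma> j)"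
    using \<open>i \<in> {..<N}\<close> by (simp add: sum.distrib)
qed

lemma aux_cov_form_at_spin_eq:
  assumes "\<And>i j. g i j = g j i" and "\<And>i. g i i = 0" and "\<sigma> \<in> spin_configs N"
  shows "(\<Sum>i<N. \<Sum>j<N. \<sigma> i * \<sigma> j * aux_cov N g i j)
           = (\<Sum>i<N. \<Sum>j<N. \<bar>g i j\<bar>) + 2 * SK_H N g \<sigma>"
  using aux_cov_form_at_spin [of g \<sigma> N] twice_SK_H_eq_quadratic_form [of g N \<sigma>] assms
  by (simp add: sum.distrib)

lemma aux_cov_form_at_spin_nonneg:
  assumes "\<And>i. g i i = 0" and \<sigma>: "\<sigma> \<in> spin_configs N"
  shows "(\<Sum>i<N. \<Sum>j<N. \<sigma> i * \<sigma> j * aux_cov N g i j) \<ge> 0"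
proof -
  have "\<bar>g i j\<bar> + g i j * \<sigma> i * \<sigma> j \<ge> 0" if "i < N" "j < N" for i j
    using spin_configs_values [OF \<sigma> that(1)] spin_configs_values [OF \<sigma> that(2)] by auto
  then show ?thesis
    unfolding aux_cov_form_at_spin [OF assms] by (auto intro!: sum_nonneg)
qed

lemma (in prob_space) expectation_prod_cosh_aux_field:
  assumes "\<beta> \<ge> 0" and sym: "\<And>i j. g i j = g j i" and diag: "\<And>i. g i i = 0"
    and X: "centered_gaussian_vector M N X (aux_cov N g)"
  shows "expectation (\<lambda>\<omega>. \<Prod>i<N. cosh (h + sqrt \<beta> * X i \<omega>))
           = exp (\<beta> / 2 * (\<Sum>i<N. \<Sum>j<N. \<bar>g i j\<bar>))
             * ((\<Sum>\<sigma>\<in>spin_configs N. exp (\<beta> * SK_H N g \<sigma> + h * (\<Sum>i<N. \<sigma> i))) / 2 ^ N)"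
proof -
  define Z where "Z \<sigma> \<omega> = exp (sqrt \<beta> * (\<Sum>i<N. \<sigma> i * X i \<omega>))" for \<sigma> \<omega>
  have integrable_Z: "integrable M (Z \<sigma>)"
    and expectation_Z: "expectation (Z \<sigma>)
           = exp (\<beta> / 2 * (\<Sum>i<N. \<Sum>j<N. \<bar>g i j\<bar>)) * exp (\<beta> * SK_H N g \<sigma>)"
    if "\<sigma> \<in> spin_configs N" for \<sigma>
    using centered_gaussian_vector_mgf [OF X aux_cov_form_at_spin_nonneg [of g, OF diag that], of "sqrt \<beta>"]
      aux_cov_form_at_spin_eq [of g, OF sym diag that] \<open>\<beta> \<ge> 0\<close>
    unfolding Z_def by (simp_all add: exp_add [symmetric] field_simps)
  have "(\<Prod>i<N. cosh (h + sqrt \<beta> * X i \<omega>))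
      = (\<Sum>\<sigma>\<in>spin_configs N. exp (h * (\<Sum>i<N. \<sigma> i)) * Z \<sigma> \<omega>) / 2 ^ N" for \<omega>
    unfolding prod_cosh_eq_spin_average Z_def
    by (simp add: exp_add [symmetric] distrib_left sum.distrib sum_distrib_left mult_ac)
  then have "expectation (\<lambda>\<omega>. \<Prod>i<N. cosh (h + sqrt \<beta> * X i \<omega>))
      = (\<Sum>\<sigma>\<in>spin_configs N. exp (h * (\<Sum>i<N. \<sigma> i)) * expectation (Z \<sigma>)) / 2 ^ N"
    using integrable_Z by (simp add: Bochner_Integration.integral_sum)
  also have "\<dots> = exp (\<beta> / 2 * (\<Sum>i<N. \<Sum>j<N. \<bar>g i j\<bar>))
             * ((\<Sum>\<sigma>\<in>spin_configs N. exp (\<beta> * SK_H N g \<sigma> + h * (\<Sum>i<N. \<sigma> i))) / 2 ^ N)"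
    by (simp add: expectation_Z exp_add sum_distrib_left mult_ac cong: sum.cong)
  finally show ?thesis .
qed

theorem mainTheorem1:
  fixes N :: nat and \<beta> h :: real
    and g :: "nat \<Rightarrow> nat \<Rightarrow> real"
    and M :: "'a measure" and X :: "nat \<Rightarrow> 'a \<Rightarrow> real"
  assumes "\<beta> > 0"
    and "\<And>i j. g i j = g j i"
    and "\<And>i. g i i = 0"
    and "prob_space M"
    and "centered_gaussian_vector M N X (aux_cov N g)"
  shows "N_free_energy N g \<beta> h =
           ln (prob_space.expectation M
                 (\<lambda>\<omega>. exp (\<Sum>i<N. ln (cosh (h + sqrt \<beta> * X i \<omega>)))))
           - \<beta> / 2 * (\<Sum>i<N. \<Sum>j<N. \<bar>g i j\<bar>)"
proof -
  interpret prob_space M by fact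
  define Z where "Z = (\<Sum>\<sigma>\<in>spin_configs N. exp (\<beta> * SK_H N g \<sigma> + h * (\<Sum>i<N. \<sigma> i))) / 2 ^ N"
  have "Z > 0"
    unfolding Z_def using finite_spin_configs spin_configs_nonempty by (intro divide_pos_pos sum_pos) auto
  have "(\<lambda>\<omega>. exp (\<Sum>i<N. ln (cosh (h + sqrt \<beta> * X i \<omega>)))) = (\<lambda>\<omega>. \<Prod>i<N. cosh (h + sqrt \<beta> * X i \<omega>))"
    by (simp add: exp_sum)
  then have "expectation (\<lambda>\<omega>. exp (\<Sum>i<N. ln (cosh (h + sqrt \<beta> * X i \<omega>))))
      = exp (\<beta> / 2 * (\<Sum>i<N. \<Sum>j<N. \<bar>g i j\<bar>)) * Z"
    unfolding Z_def using expectation_prod_cosh_aux_field assms by simp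
  then show ?thesis
    unfolding N_free_energy_def Z_def [symmetric] using \<open>Z > 0\<close> by (simp add: ln_mult)
qed

end
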